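(* In the standing setup, let $T$ be a valid partial table, let $T(i,b)=\emptyset$, let $c$ be a column, and suppose there are $r$ distinct $(i,b)$-addable elements in $B_{i,c}$. Then either one of these elements $x$ satisfies that $C_c+x$ is independent, or there are at least $r$ positions in column $c$ that are $(i,b)$-removable.
   Context: Standing setup: $M$ is a matroid of rank $n$ on ground set $E$; $f\le n$ is a positive integer; for each $i\in\{1,\dots,f\}$ and $j\in\{1,\dots,n\}$, $B_{i,j}$ is a basis of $M$, and the sets $B_{i,j}$ are pairwise disjoint. A valid partial table $T$ assigns to each position $(i,j)\in[f]\times[n]$ either the symbol $\emptyset$ (the position is empty) or an element $T(i,j)\in B_{i,j}$, such that for every row $i$ the set $S_i=\{T(i,j):T(i,j)\ne\emptyset\}$ is independent and for every column $j$ the set $C_j=\{T(i,j):T(i,j)\neq\emptyset\}$ is independent. Notation: for a set $A$ and an element $z$, "$A+z$ is independent" means $z\notin A$ and $A\cup\{z\}$ is independent; $A-z$ denotes $A\setminus\{z\}$ for $z\in A$; expressions such as $A-z+w$ are read left to right with the same convention. Definitions (with $T(i,b)=\emptyset$): an element $x\in B_{i,c}$ is $(i,b)$-addable if either (1) $T(i,c)=\emptyset$ and both $S_i+x$ and $C_c+x$ are independent, or (2) $T(i,c)=x'\neq\emptyset$ and there is $y\in B_{i,b}$ such that $C_b+y$ and $S_i-x'+y+x$ are independent. A position $(j,c)$ with $T(j,c)=y'\neq\emptyset$ is $(i,b)$-removable if there is an $(i,b)$-addable element $x\in B_{i,c}$ such that $C_c-y'+x$ is independent. *)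

theory Defs
  imports Main
begin

definition matroid :: "'a set \<Rightarrow> ('a set \<Rightarrow> bool) \<Rightarrow> bool" where
  "matroid E indep \<longleftrightarrow> finite E \<and> indep {} \<and>
     (\<forall>X. indep X \<longrightarrow> X \<subseteq> E) \<and>
     (\<forall>X Y. indep X \<and> Y \<subseteq> X \<longrightarrow> indep Y) \<and>
     (\<forall>X Y. indep X \<and> indep Y \<and> card X < card Y \<longrightarrow> (\<exists>z\<in>Y - X. indep (insert z X)))"

definition is_basis :: "'a set \<Rightarrow> ('a set \<Rightarrow> bool) \<Rightarrow> 'a set \<Rightarrow> bool" where
  "is_basis E indep B \<longleftrightarrow> B \<subseteq> E \<and> indep B \<and> (\<forall>X. X \<subseteq> E \<and> indep X \<and> B \<subseteq> X \<longrightarrow> X = B)"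

definition matroid_rank :: "'a set \<Rightarrow> ('a set \<Rightarrow> bool) \<Rightarrow> nat" where
  "matroid_rank E indep = Max {card X | X. X \<subseteq> E \<and> indep X}"

definition indep_plus :: "('a set \<Rightarrow> bool) \<Rightarrow> 'a set \<Rightarrow> 'a \<Rightarrow> bool" where
  "indep_plus indep A z \<longleftrightarrow> z \<notin> A \<and> indep (insert z A)"

text \<open>Tables: T i j = None is the empty symbol, Some x an entry. Rows 1..f, columns 1..n.\<close>
definition row_set :: "(nat \<Rightarrow> nat \<Rightarrow> 'a option) \<Rightarrow> nat \<Rightarrow> nat \<Rightarrow> 'a set" where
  "row_set T n i = {x. \<exists>j\<in>{1..n}. T i j = Some x}"

definition col_set :: "(nat \<Rightarrow> nat \<Rightarrow> 'a option) \<Rightarrow> nat \<Rightarrow> nat \<Rightarrow> 'a set" where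
  "col_set T f j = {x. \<exists>i\<in>{1..f}. T i j = Some x}"

definition valid_table ::
  "('a set \<Rightarrow> bool) \<Rightarrow> nat \<Rightarrow> nat \<Rightarrow> (nat \<Rightarrow> nat \<Rightarrow> 'a set) \<Rightarrow> (nat \<Rightarrow> nat \<Rightarrow> 'a option) \<Rightarrow> bool" where
  "valid_table indep f n B T \<longleftrightarrow>
     (\<forall>i\<in>{1..f}. \<forall>j\<in>{1..n}. \<forall>x. T i j = Some x \<longrightarrow> x \<in> B i j) \<and>
     (\<forall>i\<in>{1..f}. indep (row_set T n i)) \<and>
     (\<forall>j\<in>{1..n}. indep (col_set T f j))"

text \<open>x \<in> B i c is (i,b)-addable (assuming T i b is empty).\<close>
definition addable ::
  "('a set \<Rightarrow> bool) \<Rightarrow> nat \<Rightarrow> nat \<Rightarrow> (nat \<Rightarrow> nat \<Rightarrow> 'a set) \<Rightarrow> (nat \<Rightarrow> nat \<Rightarrow> 'a option)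
     \<Rightarrow> nat \<Rightarrow> nat \<Rightarrow> nat \<Rightarrow> 'a \<Rightarrow> bool" where
  "addable indep f n B T i b c x \<longleftrightarrow> x \<in> B i c \<and>
     ((T i c = None \<and> indep_plus indep (row_set T n i) x \<and> indep_plus indep (col_set T f c) x) \<or>
      (\<exists>x'. T i c = Some x' \<and>
         (\<exists>y\<in>B i b. indep_plus indep (col_set T f b) y \<and>
            indep_plus indep (row_set T n i - {x'}) y \<and>
            indep_plus indep (insert y (row_set T n i - {x'})) x)))"

definition removable ::
  "('a set \<Rightarrow> bool) \<Rightarrow> nat \<Rightarrow> nat \<Rightarrow> (nat \<Rightarrow> nat \<Rightarrow> 'a set) \<Rightarrow> (nat \<Rightarrow> nat \<Rightarrow> 'a option)
     \<Rightarrow> nat \<Rightarrow> nat \<Rightarrow> nat \<Rightarrow> nat \<Rightarrow> bool" where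
  "removable indep f n B T i b j c \<longleftrightarrow>
     (\<exists>y'. T j c = Some y' \<and>
        (\<exists>x\<in>B i c. addable indep f n B T i b c x \<and> indep_plus indep (col_set T f c - {y'}) x))"

end

theory Submission
  imports Defs
begin

text \<open>
  Let \<open>C = C\<^sub>c\<close>. If no addable \<open>x\<close> extends \<open>C\<close>, then each \<open>C + x\<close> contains a unique circuit
  through \<open>x\<close>, and the elements \<open>y \<in> C\<close> with \<open>C - y + x\<close> independent are the other elements
  of that circuit. Call \<open>R\<close> the set of all such \<open>y\<close>, over all addable \<open>x\<close>. Were \<open>R\<close> smaller
  than the independent set \<open>X\<close> of addable elements, augmentation would give \<open>x \<in> X - R\<close>
  with \<open>R + x\<close> independent, so the circuit through \<open>x\<close> leaves \<open>R\<close>: contradiction. Each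
  \<open>y \<in> R\<close> sits in its own row of column \<open>c\<close>, and that position is removable.
\<close>

lemma matroid_indep_subset:
  "matroid E indep \<Longrightarrow> indep X \<Longrightarrow> Y \<subseteq> X \<Longrightarrow> indep Y"
  unfolding matroid_def by blast

lemma matroid_indep_finite:
  "matroid E indep \<Longrightarrow> indep X \<Longrightarrow> finite X"
  unfolding matroid_def by (meson finite_subset)

lemma matroid_augment:
  "matroid E indep \<Longrightarrow> indep X \<Longrightarrow> indep Y \<Longrightarrow> card X < card Y \<Longrightarrow>
     \<exists>z\<in>Y - X. indep (insert z X)"
  unfolding matroid_def by blast

lemma matroid_augment_within:
  assumes M: "matroid E indep"
    and "indep A" "indep C" "A \<subseteq> S" "C \<subseteq> S"
  shows "\<exists>I. indep I \<and> A \<subseteq> I \<and> I \<subseteq> S \<and> card C \<le> card I"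
  using assms(2-)
proof (induction "card C - card A" arbitrary: A rule: less_induct)
  case (less A)
  show ?case
  proof (cases "card C \<le> card A")
    case True
    then show ?thesis using less.prems by blast
  next
    case False
    then obtain z where z: "z \<in> C - A" "indep (insert z A)"
      using matroid_augment[OF M less.prems(1,2)] by auto
    have "card (insert z A) = Suc (card A)"
      using z matroid_indep_finite[OF M less.prems(1)] by simp
    then have "card C - card (insert z A) < card C - card A" using False by simp
    with z less.prems show ?thesis
      using less.hyps[of "insert z A"] by blast
  qed
qed

text \<open>Extend \<open>A + z\<close> inside \<open>C + z\<close> to size \<open>|C|\<close>; the one element of \<open>C\<close> it misses does the job.\<close>
lemma matroid_exchange_outside:
  assumes M: "matroid E indep" and C: "indep C"
    and z: "z \<notin> C" "\<not> indep (insert z C)"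
    and A: "A \<subseteq> C" "indep (insert z A)"
  shows "\<exists>y\<in>C - A. indep (insert z (C - {y}))"
proof -
  have fC: "finite C" using matroid_indep_finite[OF M C] .
  obtain I where I: "indep I" "insert z A \<subseteq> I" "I \<subseteq> insert z C" "card C \<le> card I"
    using matroid_augment_within[OF M A(2) C, of "insert z C"] A(1) by blast
  have "I \<noteq> insert z C" using I(1) z(2) by blast
  then obtain y where y: "y \<in> C" "y \<notin> I" "y \<noteq> z"
    using I(2,3) by blast
  have "card (insert z (C - {y})) = card C"
    using fC z(1) y(1) card_Suc_Diff1[OF fC y(1)] by simp
  then have "I = insert z (C - {y})"
    using I(3,4) y fC by (intro card_seteq) auto
  then show ?thesis using I(1,2) y by blast
qed

lemma card_le_card_exchangeable:
  assumes M: "matroid E indep" and C: "indep C" and X: "indep X"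
    and no_ext: "\<forall>x\<in>X. \<not> indep_plus indep C x"
  shows "card X \<le> card {y \<in> C. \<exists>x\<in>X. indep_plus indep (C - {y}) x}"
proof (rule ccontr)
  define R where "R = {y \<in> C. \<exists>x\<in>X. indep_plus indep (C - {y}) x}"
  assume "\<not> card X \<le> card {y \<in> C. \<exists>x\<in>X. indep_plus indep (C - {y}) x}"
  then have "card R < card X" unfolding R_def by simp
  moreover have "R \<subseteq> C" unfolding R_def by blast
  then have "indep R" using matroid_indep_subset[OF M C] by blast
  ultimately obtain z where z: "z \<in> X" "z \<notin> R" "indep (insert z R)"
    using matroid_augment[OF M _ X] by blast
  have "z \<notin> C"
  proof
    assume "z \<in> C"
    then have "indep_plus indep (C - {z}) z"
      using C by (simp add: indep_plus_def insert_absorb)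
    with z(1,2) \<open>z \<in> C\<close> show False unfolding R_def by blast
  qed
  with z(1) no_ext have "\<not> indep (insert z C)" unfolding indep_plus_def by blast
  then obtain y where y: "y \<in> C" "y \<notin> R" "indep (insert z (C - {y}))"
    using matroid_exchange_outside[OF M C \<open>z \<notin> C\<close> _ \<open>R \<subseteq> C\<close> z(3)] by blast
  moreover have "indep_plus indep (C - {y}) z"
    using y(3) \<open>z \<notin> C\<close> unfolding indep_plus_def by blast
  ultimately show False using z(1) unfolding R_def by blast
qed

lemma card_exchangeable_le_card_removable:
  assumes X_add: "\<forall>x\<in>X. addable indep f n B T i b c x"
  shows "card {y \<in> col_set T f c. \<exists>x\<in>X. indep_plus indep (col_set T f c - {y}) x}
           \<le> card {j \<in> {1..f}. removable indep f n B T i b j c}"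
    (is "card ?R \<le> card ?J")
proof -
  have "?R \<subseteq> (\<lambda>j. the (T j c)) ` ?J"
  proof
    fix y assume y: "y \<in> ?R"
    then obtain j where j: "j \<in> {1..f}" "T j c = Some y"
      unfolding col_set_def by blast
    from y obtain x where "x \<in> X" "indep_plus indep (col_set T f c - {y}) x"
      by blast
    moreover from \<open>x \<in> X\<close> X_add have "addable indep f n B T i b c x" "x \<in> B i c"
      unfolding addable_def by blast+
    ultimately have "removable indep f n B T i b j c"
      using j(2) unfolding removable_def by blast
    with j show "y \<in> (\<lambda>j. the (T j c)) ` ?J" by force
  qed
  then have "card ?R \<le> card ((\<lambda>j. the (T j c)) ` ?J)"
    by (intro card_mono) auto
  also have "\<dots> \<le> card ?J" by (rule card_image_le) simp
  finally show ?thesis .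
qed

theorem mainTheorem5:
  fixes E :: "'a set" and indep :: "'a set \<Rightarrow> bool" and n f :: nat
    and B :: "nat \<Rightarrow> nat \<Rightarrow> 'a set" and T :: "nat \<Rightarrow> nat \<Rightarrow> 'a option"
    and i b c r :: nat and X :: "'a set"
  assumes M: "matroid E indep" and rk: "matroid_rank E indep = n"
    and f_pos: "0 < f" and f_le: "f \<le> n"
    and bases: "\<forall>i\<in>{1..f}. \<forall>j\<in>{1..n}. is_basis E indep (B i j)"
    and disj: "\<forall>i\<in>{1..f}. \<forall>j\<in>{1..n}. \<forall>i'\<in>{1..f}. \<forall>j'\<in>{1..n}.
                 (i, j) \<noteq> (i', j') \<longrightarrow> B i j \<inter> B i' j' = {}"
    and valid: "valid_table indep f n B T"
    and i: "i \<in> {1..f}" and b: "b \<in> {1..n}" and c: "c \<in> {1..n}"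
    and empty: "T i b = None"
    and X_sub: "X \<subseteq> B i c" and X_fin: "finite X" and X_card: "card X = r"
    and X_add: "\<forall>x\<in>X. addable indep f n B T i b c x"
  shows "(\<exists>x\<in>X. indep_plus indep (col_set T f c) x) \<or>
         r \<le> card {j \<in> {1..f}. removable indep f n B T i b j c}"
proof -
  have "r \<le> card {j \<in> {1..f}. removable indep f n B T i b j c}"
    if no_ext: "\<forall>x\<in>X. \<not> indep_plus indep (col_set T f c) x"
  proof -
    have col_indep: "indep (col_set T f c)"
      using valid c unfolding valid_table_def by blast
    have "indep (B i c)" using bases i c unfolding is_basis_def by blast
    then have "indep X" using matroid_indep_subset[OF M _ X_sub] by blast
    then have "r \<le> card {y \<in> col_set T f c. \<exists>x\<in>X. indep_plus indep (col_set T f c - {y}) x}"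
      using card_le_card_exchangeable[OF M col_indep _ no_ext] X_card by simp
    then show ?thesis using card_exchangeable_le_card_removable[OF X_add] by linarith
  qed
  then show ?thesis by blast
qed

end
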